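(* Let $A\in\mathbb{C}\setminus\{0\}$, let $\sqrt{A}$ denote either square root of $A$, and let $|q|<1$. Define $G(A;q):=\sum_{n\geq0}\frac{q^{n^2+2n}(A;q^2)_n}{(q^2;q^2)_n}$. Then $$G(A;q)=\frac1{2\sqrt{A}} (-q;q^2)_{\infty}\left[(-\sqrt{A};-q)_{\infty}- (\sqrt{A};-q)_{\infty}\right].$$
   Context: The $q$-Pochhammer symbol: $(a;q)_0=1$, $(a;q)_n=\prod_{j=0}^{n-1}(1-aq^j)$ for $n\ge1$, and $(a;q)_\infty=\prod_{j\ge0}(1-aq^j)$. *)

theory Defs
  imports "HOL-Analysis.Analysis"
begin

definition qpoch :: "complex \<Rightarrow> complex \<Rightarrow> nat \<Rightarrow> complex" where
  "qpoch a q n = (\<Prod>j<n. 1 - a * q ^ j)"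

definition qpoch_inf :: "complex \<Rightarrow> complex \<Rightarrow> complex" where
  "qpoch_inf a q = (\<Prod>j. 1 - a * q ^ j)"

definition G :: "complex \<Rightarrow> complex \<Rightarrow> complex" where
  "G A q = (\<Sum>n. q ^ (n\<^sup>2 + 2 * n) * qpoch A (q\<^sup>2) n / qpoch (q\<^sup>2) (q\<^sup>2) n)"

end

theory Submission
  imports Defs
begin

text \<open>
  By the Cauchy q-binomial theorem, (A;q^2)_n / (q^2;q^2)_n is a finite sum over k <= n, so
  G(A;q) becomes an absolutely convergent double series over pairs (k, m) with n = k + m.
  Summing over m first with Euler's identity
    sum_m Q^(m choose 2) w^m / (Q;Q)_m = (-w;Q)_inf,   Q = q^2,
  leaves (-q;q^2)_inf sum_k A^k c_(2k+1), where c_n = (-q)^(n choose 2) / (-q;-q)_n are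
  Euler's coefficients to the base -q; here (-q;-q)_(2k+1) = (q^2;q^2)_k (-q;q^2)_(k+1).
  For A = s^2 the remaining series is 1/s times the odd part of Euler's series
  sum_n c_n s^n = (-s;-q)_inf.
\<close>

lemma summable_norm_ratio_vanishing:
  fixes f :: "nat \<Rightarrow> 'a::real_normed_vector"
  assumes ratio: "\<And>n. norm (f (Suc n)) \<le> C * r ^ n * norm (f n)" and "0 \<le> r" "r < 1"
  shows "summable (\<lambda>n. norm (f n))"
proof -
  have "(\<lambda>n. C * r ^ n) \<longlonglongrightarrow> 0"
    using assms(2,3) by (intro tendsto_mult_right_zero LIMSEQ_power_zero) auto
  then have "eventually (\<lambda>n. C * r ^ n < 1/2) sequentially"
    by (rule order_tendstoD) auto
  then obtain N where N: "\<And>n. n \<ge> N \<Longrightarrow> C * r ^ n < 1/2"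
    by (auto simp: eventually_at_top_linorder)
  show ?thesis
  proof (rule summable_ratio_test[of "1/2" N])
    fix n assume "n \<ge> N"
    have "norm (f (Suc n)) \<le> C * r ^ n * norm (f n)" by (rule ratio)
    also have "\<dots> \<le> 1/2 * norm (f n)"
      using N[OF \<open>n \<ge> N\<close>] by (intro mult_right_mono) auto
    finally show "norm (norm (f (Suc n))) \<le> 1/2 * norm (norm (f n))" by simp
  qed auto
qed

lemma sums_odd_terms:
  fixes c :: "nat \<Rightarrow> 'a::real_normed_field"
  assumes "(\<lambda>n. c n * z ^ n) sums F" and "(\<lambda>n. c n * (- z) ^ n) sums F'"
  shows "(\<lambda>k. c (2 * k + 1) * z ^ (2 * k + 1)) sums ((F - F') / 2)"
proof -
  define h where "h n = c n * z ^ n - c n * (- z) ^ n" for n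
  have "h sums (F - F')"
    unfolding h_def using assms by (rule sums_diff)
  moreover have "h n = 0" if "n \<notin> range (\<lambda>k. 2 * k + 1)" for n
    using that oddE[of n] by (force simp: h_def)
  ultimately have "(\<lambda>k. h (2 * k + 1)) sums (F - F')"
    by (subst sums_mono_reindex) (auto intro: strict_monoI)
  then have "(\<lambda>k. h (2 * k + 1) / 2) sums ((F - F') / 2)"
    by (rule sums_divide)
  then show ?thesis
    by (simp add: h_def mult_ac)
qed

lemma sums_antidiagonal:
  fixes f :: "nat \<times> nat \<Rightarrow> 'a::{topological_comm_monoid_add,t3_space}"
  assumes "(f has_sum S) UNIV"
  shows "(\<lambda>n. \<Sum>k\<le>n. f (k, n - k)) sums S"
proof -
  define g :: "nat \<times> nat \<Rightarrow> nat \<times> nat" where "g = (\<lambda>(n, k). (k, n - k))"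
  have "bij_betw g (SIGMA n:UNIV. {..n}) UNIV"
    by (rule bij_betwI[where g = "\<lambda>(k, m). (k + m, k)"]) (auto simp: g_def)
  then have "((\<lambda>x. f (g x)) has_sum S) (SIGMA n:UNIV. {..n})"
    using assms by (simp add: has_sum_reindex_bij_betw)
  then have "((\<lambda>n. \<Sum>k\<le>n. f (k, n - k)) has_sum S) UNIV"
    by (rule has_sum_SigmaD) (simp add: g_def)
  then show ?thesis
    by (rule has_sum_imp_sums)
qed

lemma sums_row_sums:
  fixes f :: "nat \<times> nat \<Rightarrow> 'a::banach"
  assumes S: "(f has_sum S) UNIV" and rows: "\<And>k. (\<lambda>m. f (k, m)) sums r k"
  shows "r sums S"
proof -
  have row_sums: "((\<lambda>m. f (k, m)) has_sum r k) UNIV" for k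
  proof -
    have "f summable_on range (Pair k)"
      using has_sum_imp_summable[OF S] by (rule summable_on_subset_banach) simp
    then have "(f \<circ> Pair k) summable_on UNIV"
      using summable_on_reindex[of "Pair k" UNIV f] by (simp add: inj_on_def)
    then have row: "((\<lambda>m. f (k, m)) has_sum infsum (\<lambda>m. f (k, m)) UNIV) UNIV"
      by (simp add: o_def)
    have "infsum (\<lambda>m. f (k, m)) UNIV = r k"
      using has_sum_imp_sums[OF row] rows by (rule sums_unique2)
    with row show ?thesis
      by simp
  qed
  have "(f has_sum S) (SIGMA k:UNIV. UNIV)"
    using S by simp
  then have "(r has_sum S) UNIV"
    by (rule has_sum_SigmaD) (rule row_sums)
  then show ?thesis
    by (rule has_sum_imp_sums)
qed

lemma summable_on_dominated_product:
  fixes f :: "nat \<times> nat \<Rightarrow> 'a::banach"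
  assumes "summable a" "summable b" "\<And>k. 0 \<le> a k" "\<And>m. 0 \<le> b m"
    and bound: "\<And>k m. norm (f (k, m)) \<le> a k * b m"
  shows "f summable_on UNIV"
proof -
  have rows: "((\<lambda>m. a k * b m) has_sum a k * suminf b) UNIV" for k
    using assms(2,4)
    by (intro has_sum_cmult_right sums_nonneg_imp_has_sum) (auto simp: summable_sums)
  have "(\<lambda>k. a k * suminf b) summable_on UNIV"
    using assms(1,3)
    by (intro summable_on_cmult_left sums_nonneg_imp_has_sum[THEN has_sum_imp_summable])
      (auto simp: summable_sums)
  then have "(\<lambda>(k, m). a k * b m) summable_on (SIGMA k:UNIV. UNIV)"
    using rows assms(3,4) by (intro summable_on_SigmaI) auto
  then have "(\<lambda>(k, m). a k * b m) summable_on UNIV"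
    by simp
  then have "(\<lambda>km. norm (f km)) summable_on UNIV"
    by (rule summable_on_comparison_test) (use bound in auto)
  then show ?thesis
    by (rule abs_summable_summable)
qed

lemma qpoch_0 [simp]: "qpoch a q 0 = 1"
  by (simp add: qpoch_def)

lemma qpoch_Suc: "qpoch a q (Suc n) = qpoch a q n * (1 - a * q ^ n)"
  by (simp add: qpoch_def lessThan_Suc mult.commute)

lemma norm_one_minus_mult_power_ge:
  fixes a q :: complex
  assumes "norm q \<le> 1"
  shows "1 - norm a \<le> norm (1 - a * q ^ n)"
proof -
  have "norm (a * q ^ n) \<le> norm a"
    using assms by (simp add: norm_mult norm_power mult_left_le power_le_one)
  then show ?thesis
    using norm_triangle_ineq3[of 1 "a * q ^ n"] by simp
qed

lemma qpoch_nonzero: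
  fixes a q :: complex
  assumes "norm a < 1" "norm q \<le> 1"
  shows "qpoch a q n \<noteq> 0"
proof -
  have "1 - a * q ^ j \<noteq> 0" for j
    using norm_one_minus_mult_power_ge[OF assms(2), of a j] assms(1) by auto
  then show ?thesis
    by (simp add: qpoch_def)
qed

lemma qpoch_LIMSEQ:
  fixes a q :: complex
  assumes "norm q < 1"
  shows "(\<lambda>n. qpoch a q n) \<longlonglongrightarrow> qpoch_inf a q"
proof -
  have "summable (\<lambda>j. norm a * norm q ^ j)"
    using assms by (intro summable_mult summable_geometric) auto
  then have "convergent_prod (\<lambda>j. 1 - a * q ^ j)"
    by (intro abs_convergent_prod_imp_convergent_prod summable_imp_abs_convergent_prod)
       (simp add: norm_mult norm_power)
  then have "(\<lambda>n. \<Prod>j\<le>n. 1 - a * q ^ j) \<longlonglongrightarrow> qpoch_inf a q"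
    unfolding qpoch_inf_def by (rule convergent_prod_LIMSEQ)
  then have "(\<lambda>n. qpoch a q (Suc n)) \<longlonglongrightarrow> qpoch_inf a q"
    by (simp add: qpoch_def lessThan_Suc_atMost)
  then show ?thesis
    by (rule LIMSEQ_imp_Suc)
qed

lemma double_choose_two_plus_self: "2 * (n choose 2) + n = n * n"
  by (induction n) (simp_all add: numeral_2_eq_2 algebra_simps)

lemma norm_power2_less_1:
  fixes q :: complex
  shows "norm q < 1 \<Longrightarrow> norm (q\<^sup>2) < 1"
  by (simp add: norm_power power_less_one_iff)

definition euler_coeff :: "complex \<Rightarrow> nat \<Rightarrow> complex" where
  "euler_coeff Q n = Q ^ (n choose 2) / qpoch Q Q n"

definition euler_series :: "complex \<Rightarrow> complex \<Rightarrow> complex" where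
  "euler_series Q z = (\<Sum>n. euler_coeff Q n * z ^ n)"

lemma euler_coeff_Suc:
  assumes "norm Q < 1"
  shows "euler_coeff Q (Suc n) * (1 - Q * Q ^ n) = euler_coeff Q n * Q ^ n"
  using qpoch_nonzero[of Q Q "Suc n"] assms
  by (simp add: euler_coeff_def qpoch_Suc numeral_2_eq_2 power_add)

lemma summable_norm_euler_series:
  assumes Q: "norm Q < 1"
  shows "summable (\<lambda>n. norm (euler_coeff Q n * z ^ n))"
proof (rule summable_norm_ratio_vanishing[where C = "norm z / (1 - norm Q)" and r = "norm Q"])
  fix n
  have lower: "1 - norm Q \<le> norm (1 - Q * Q ^ n)" and pos: "0 < 1 - norm Q"
    using Q by (auto intro: norm_one_minus_mult_power_ge)
  have "euler_coeff Q (Suc n) * z ^ Suc n * (1 - Q * Q ^ n)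
      = (euler_coeff Q (Suc n) * (1 - Q * Q ^ n)) * z ^ Suc n"
    by (simp only: mult_ac)
  also have "\<dots> = Q ^ n * z * (euler_coeff Q n * z ^ n)"
    by (simp only: euler_coeff_Suc[OF Q]) (simp add: mult_ac)
  finally have "norm (euler_coeff Q (Suc n) * z ^ Suc n) * norm (1 - Q * Q ^ n)
      = norm Q ^ n * norm z * norm (euler_coeff Q n * z ^ n)"
    by (metis norm_mult norm_power)
  then have "norm (euler_coeff Q (Suc n) * z ^ Suc n)
      = norm Q ^ n * norm z * norm (euler_coeff Q n * z ^ n) / norm (1 - Q * Q ^ n)"
    using lower pos by (intro eq_divide_imp) auto
  also have "\<dots> \<le> norm Q ^ n * norm z * norm (euler_coeff Q n * z ^ n) / (1 - norm Q)"
    using lower pos by (intro divide_left_mono mult_pos_pos) auto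
  finally show "norm (euler_coeff Q (Suc n) * z ^ Suc n)
      \<le> norm z / (1 - norm Q) * norm Q ^ n * norm (euler_coeff Q n * z ^ n)"
    by (simp add: mult_ac)
qed (use Q in auto)

lemma euler_series_sums:
  assumes "norm Q < 1"
  shows "(\<lambda>n. euler_coeff Q n * z ^ n) sums euler_series Q z"
  unfolding euler_series_def
  using summable_norm_euler_series[OF assms] by (rule summable_sums[OF summable_norm_cancel])

lemma euler_series_shift:
  assumes Q: "norm Q < 1"
  shows "euler_series Q z = (1 + z) * euler_series Q (z * Q)"
proof -
  define a where "a n = euler_coeff Q n * z ^ n" for n
  define b where "b n = euler_coeff Q n * (z * Q) ^ n" for n
  have "(\<lambda>n. a n - b n) sums (euler_series Q z - euler_series Q (z * Q))"
    unfolding a_def b_def using Q by (intro sums_diff euler_series_sums)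
  then have "(\<lambda>n. a (Suc n) - b (Suc n)) sums (euler_series Q z - euler_series Q (z * Q))"
    by (subst sums_Suc_iff) (simp add: a_def b_def)
  moreover have "a (Suc n) - b (Suc n) = z * b n" for n
  proof -
    have "a (Suc n) - b (Suc n) = z * z ^ n * (euler_coeff Q (Suc n) * (1 - Q * Q ^ n))"
      by (simp add: a_def b_def power_mult_distrib algebra_simps)
    also have "\<dots> = z * b n"
      by (simp add: euler_coeff_Suc[OF Q] b_def power_mult_distrib mult_ac)
    finally show ?thesis .
  qed
  ultimately have "(\<lambda>n. z * b n) sums (euler_series Q z - euler_series Q (z * Q))"
    by simp
  moreover have "(\<lambda>n. z * b n) sums (z * euler_series Q (z * Q))"
    unfolding b_def using Q by (intro sums_mult euler_series_sums)
  ultimately have "euler_series Q z - euler_series Q (z * Q) = z * euler_series Q (z * Q)"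
    by (rule sums_unique2)
  then show ?thesis
    by (simp add: algebra_simps)
qed

lemma euler_series_shift_power:
  assumes "norm Q < 1"
  shows "euler_series Q z = qpoch (- z) Q N * euler_series Q (z * Q ^ N)"
proof (induction N)
  case (Suc N)
  then show ?case
    using euler_series_shift[OF assms, of "z * Q ^ N"] by (simp add: qpoch_Suc mult_ac)
qed simp

lemma euler_series_eq_qpoch_inf:
  assumes Q: "norm Q < 1"
  shows "euler_series Q z = qpoch_inf (- z) Q"
proof -
  have "summable (\<lambda>n. euler_coeff Q n * 1 ^ n)"
    using summable_norm_euler_series[OF Q] by (rule summable_norm_cancel)
  then have "isCont (euler_series Q) 0"
    unfolding euler_series_def by (rule isCont_powser) simp
  moreover have "(\<lambda>N. z * Q ^ N) \<longlonglongrightarrow> 0"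
    using Q by (intro tendsto_mult_right_zero LIMSEQ_power_zero) auto
  ultimately have "(\<lambda>N. euler_series Q (z * Q ^ N)) \<longlonglongrightarrow> euler_series Q 0"
    by (rule isCont_tendsto_compose)
  also have "euler_series Q 0 = 1"
    unfolding euler_series_def powser_zero by (simp add: euler_coeff_def binomial_eq_0)
  finally have "(\<lambda>N. qpoch (- z) Q N * euler_series Q (z * Q ^ N)) \<longlonglongrightarrow> qpoch_inf (- z) Q * 1"
    by (rule tendsto_mult[OF qpoch_LIMSEQ[OF Q]])
  also have "(\<lambda>N. qpoch (- z) Q N * euler_series Q (z * Q ^ N)) = (\<lambda>N. euler_series Q z)"
    by (rule ext) (rule euler_series_shift_power[OF Q, symmetric])
  finally show ?thesis
    by (simp add: LIMSEQ_const_iff)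
qed

theorem euler_identity:
  assumes "norm Q < 1"
  shows "(\<lambda>n. euler_coeff Q n * z ^ n) sums qpoch_inf (- z) Q"
  using summable_norm_euler_series[OF assms] euler_series_eq_qpoch_inf[OF assms]
  by (metis euler_series_def summable_norm_cancel summable_sums)

lemma qpoch_inf_split:
  assumes "norm Q < 1"
  shows "qpoch_inf a Q = qpoch a Q N * qpoch_inf (a * Q ^ N) Q"
  using euler_series_shift_power[OF assms, of "- a" N] euler_series_eq_qpoch_inf[OF assms]
  by simp

fun qbinomial :: "complex \<Rightarrow> nat \<Rightarrow> nat \<Rightarrow> complex" where
  "qbinomial Q n 0 = 1"
| "qbinomial Q 0 (Suc k) = 0"
| "qbinomial Q (Suc n) (Suc k) = qbinomial Q n (Suc k) + Q ^ (n - k) * qbinomial Q n k"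

lemma qbinomial_eq_0: "n < k \<Longrightarrow> qbinomial Q n k = 0"
  by (induction Q n k rule: qbinomial.induct) auto

lemma choose_two_Suc: "Suc n choose 2 = (n choose 2) + n"
  by (simp add: numeral_2_eq_2)

theorem qpoch_eq_sum_qbinomial:
  "qpoch x Q n = (\<Sum>k\<le>n. qbinomial Q n k * (- x) ^ k * Q ^ (k choose 2))"
proof (induction n)
  case (Suc n)
  define t where "t k = (- x) ^ k * Q ^ (k choose 2)" for k
  have t_Suc: "Q ^ (n - k) * t (Suc k) = - x * Q ^ n * t k" if "k \<le> n" for k
  proof -
    have "Q ^ (n - k) * Q ^ k = Q ^ n"
      using that by (simp flip: power_add)
    then show ?thesis
      unfolding t_def choose_two_Suc power_add power_Suc
      by (metis mult.assoc mult.commute mult.left_commute)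
  qed
  have "(\<Sum>k\<le>Suc n. qbinomial Q (Suc n) k * t k)
      = t 0 + (\<Sum>k\<le>n. qbinomial Q n (Suc k) * t (Suc k))
        + (\<Sum>k\<le>n. Q ^ (n - k) * qbinomial Q n k * t (Suc k))"
    by (subst sum.atMost_Suc_shift) (simp add: distrib_right sum.distrib)
  also have "t 0 + (\<Sum>k\<le>n. qbinomial Q n (Suc k) * t (Suc k)) = (\<Sum>k\<le>Suc n. qbinomial Q n k * t k)"
    by (subst sum.atMost_Suc_shift) simp
  also have "\<dots> = (\<Sum>k\<le>n. qbinomial Q n k * t k)"
    by (simp add: qbinomial_eq_0)
  also have "(\<Sum>k\<le>n. Q ^ (n - k) * qbinomial Q n k * t (Suc k))
      = - x * Q ^ n * (\<Sum>k\<le>n. qbinomial Q n k * t k)"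
    unfolding sum_distrib_left
  proof (rule sum.cong)
    fix k assume "k \<in> {..n}"
    then have "Q ^ (n - k) * t (Suc k) = - x * Q ^ n * t k"
      by (simp add: t_Suc)
    then show "Q ^ (n - k) * qbinomial Q n k * t (Suc k) = - x * Q ^ n * (qbinomial Q n k * t k)"
      by (metis mult.assoc mult.left_commute)
  qed simp
  finally show ?case
    using Suc by (simp add: t_def qpoch_Suc algebra_simps binomial_eq_0)
qed (simp add: binomial_eq_0)

lemma qbinomial_mult_qpoch:
  "k \<le> n \<Longrightarrow> qbinomial Q n k * qpoch Q Q k * qpoch Q Q (n - k) = qpoch Q Q n"
proof (induction n arbitrary: k)
  case (Suc n)
  show ?case
  proof (cases k)
    case (Suc j)
    define D where "D = qpoch Q Q"
    have j: "j \<le> n"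
      using Suc \<open>k \<le> Suc n\<close> by simp
    have left: "qbinomial Q n (Suc j) * D (Suc j) * D (n - j) = (1 - Q ^ (n - j)) * D n"
    proof (cases "j = n")
      case False
      then have "n - j = Suc (n - Suc j)"
        using j by simp
      then have "D (n - j) = D (n - Suc j) * (1 - Q ^ (n - j))"
        by (simp add: D_def qpoch_Suc)
      then have "qbinomial Q n (Suc j) * D (Suc j) * D (n - j)
          = (qbinomial Q n (Suc j) * D (Suc j) * D (n - Suc j)) * (1 - Q ^ (n - j))"
        by (simp add: mult_ac)
      then show ?thesis
        using Suc.IH[of "Suc j"] j False by (simp add: D_def)
    qed (simp add: qbinomial_eq_0)
    have right: "qbinomial Q n j * D (Suc j) * D (n - j) = (1 - Q * Q ^ j) * D n"
      using Suc.IH[OF j] by (simp add: D_def qpoch_Suc algebra_simps)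
    have "qbinomial Q (Suc n) k * D k * D (Suc n - k)
        = qbinomial Q n (Suc j) * D (Suc j) * D (n - j)
          + Q ^ (n - j) * (qbinomial Q n j * D (Suc j) * D (n - j))"
      using \<open>k = Suc j\<close> by (simp add: algebra_simps)
    also have "\<dots> = D n - Q ^ (n - j) * (Q * Q ^ j) * D n"
      unfolding left right by (simp add: algebra_simps)
    also have "Q ^ (n - j) * (Q * Q ^ j) = Q * Q ^ n"
      using j by (simp add: mult.left_commute flip: power_add)
    finally show ?thesis
      by (simp add: D_def qpoch_Suc algebra_simps)
  qed simp
qed simp

corollary qpoch_div_qpoch_eq_sum:
  assumes "norm Q < 1"
  shows "qpoch x Q n / qpoch Q Q n
       = (\<Sum>k\<le>n. (- x) ^ k * Q ^ (k choose 2) / (qpoch Q Q k * qpoch Q Q (n - k)))"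
proof -
  have "qbinomial Q n k * (- x) ^ k * Q ^ (k choose 2) / qpoch Q Q n
      = (- x) ^ k * Q ^ (k choose 2) / (qpoch Q Q k * qpoch Q Q (n - k))" if "k \<le> n" for k
  proof -
    have "qpoch Q Q m \<noteq> 0" for m
      using assms by (intro qpoch_nonzero) auto
    moreover have "qpoch Q Q n = qbinomial Q n k * (qpoch Q Q k * qpoch Q Q (n - k))"
      using qbinomial_mult_qpoch[OF that, of Q] by (simp add: mult.assoc)
    moreover from calculation have "qbinomial Q n k \<noteq> 0"
      by (metis mult_zero_left)
    ultimately show ?thesis
      by (simp add: field_simps)
  qed
  then show ?thesis
    unfolding qpoch_eq_sum_qbinomial[of x Q n] sum_divide_distrib by (intro sum.cong) auto
qed

lemma qpoch_neg_odd:
  fixes q :: complex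
  shows "qpoch (- q) (- q) (2 * k + 1) = qpoch (q\<^sup>2) (q\<^sup>2) k * qpoch (- q) (q\<^sup>2) (Suc k)"
proof (induction k)
  case (Suc k)
  have "2 * Suc k + 1 = Suc (Suc (2 * k + 1))"
    by simp
  then have "qpoch (- q) (- q) (2 * Suc k + 1)
      = qpoch (- q) (- q) (2 * k + 1) * (1 - (- q) * (- q) ^ (2 * k + 1))
          * (1 - (- q) * (- q) ^ (2 * k + 2))"
    by (simp only: qpoch_Suc) simp
  also have "(- q) * (- q) ^ (2 * k + 1) = q\<^sup>2 * (q\<^sup>2) ^ k"
    by (simp add: power_mult power2_eq_square)
  also have "(- q) * (- q) ^ (2 * k + 2) = (- q) * (q\<^sup>2) ^ Suc k"
    by (simp add: power_mult power2_eq_square)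
  also note Suc.IH
  finally show ?case
    by (simp only: qpoch_Suc[of "q\<^sup>2" "q\<^sup>2" k] qpoch_Suc[of "- q" "q\<^sup>2" "Suc k"] mult_ac)
qed (simp add: qpoch_Suc)

definition G_coeff :: "complex \<Rightarrow> complex \<Rightarrow> nat \<Rightarrow> complex" where
  "G_coeff A q k = (- A) ^ k * q ^ (2 * k * k + k) / qpoch (q\<^sup>2) (q\<^sup>2) k"

text \<open>
  The \<open>(k, n - k)\<close> entries of this array are the \<open>k\<close>-th summands of the q-binomial
  expansion of the \<open>n\<close>-th term of \<open>G\<close>.
\<close>
definition G_array :: "complex \<Rightarrow> complex \<Rightarrow> nat \<times> nat \<Rightarrow> complex" where
  "G_array A q = (\<lambda>(k, m). G_coeff A q k * (euler_coeff (q\<^sup>2) m * (q ^ (2 * k + 3)) ^ m))"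

lemma G_term_eq_antidiagonal_sum:
  assumes "norm q < 1"
  shows "q ^ (n\<^sup>2 + 2 * n) * qpoch A (q\<^sup>2) n / qpoch (q\<^sup>2) (q\<^sup>2) n
           = (\<Sum>k\<le>n. G_array A q (k, n - k))"
proof -
  have "norm (q\<^sup>2) < 1"
    using assms by (rule norm_power2_less_1)
  then have "q ^ (n\<^sup>2 + 2 * n) * qpoch A (q\<^sup>2) n / qpoch (q\<^sup>2) (q\<^sup>2) n
      = (\<Sum>k\<le>n. q ^ (n\<^sup>2 + 2 * n) * ((- A) ^ k * (q\<^sup>2) ^ (k choose 2)
                  / (qpoch (q\<^sup>2) (q\<^sup>2) k * qpoch (q\<^sup>2) (q\<^sup>2) (n - k))))"
    by (simp only: times_divide_eq_right[symmetric] qpoch_div_qpoch_eq_sum sum_distrib_left)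
  also have "\<dots> = (\<Sum>k\<le>n. G_array A q (k, n - k))"
  proof (rule sum.cong[OF refl])
    fix k assume "k \<in> {..n}"
    then obtain m where n: "n = k + m"
      using le_iff_add by auto
    have "n\<^sup>2 + 2 * n + 2 * (k choose 2) = 2 * k * k + k + (2 * (m choose 2) + (2 * k + 3) * m)"
      using double_choose_two_plus_self[of k] double_choose_two_plus_self[of m]
      unfolding n power2_eq_square by (simp add: algebra_simps)
    then have "q ^ (n\<^sup>2 + 2 * n) * (q\<^sup>2) ^ (k choose 2)
        = q ^ (2 * k * k + k) * ((q\<^sup>2) ^ (m choose 2) * (q ^ (2 * k + 3)) ^ m)"
      by (simp only: power_mult[symmetric] power_add[symmetric])
    then show "q ^ (n\<^sup>2 + 2 * n) * ((- A) ^ k * (q\<^sup>2) ^ (k choose 2)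
                  / (qpoch (q\<^sup>2) (q\<^sup>2) k * qpoch (q\<^sup>2) (q\<^sup>2) (n - k)))
        = G_array A q (k, n - k)"
      by (simp add: G_array_def G_coeff_def euler_coeff_def n mult_ac)
  qed
  finally show ?thesis .
qed

lemma G_coeff_eq_odd_euler_coeff:
  assumes "norm q < 1"
  shows "G_coeff A q k = A ^ k * euler_coeff (- q) (2 * k + 1) * qpoch (- q) (q\<^sup>2) (Suc k)"
proof -
  have "norm (q\<^sup>2) < 1"
    using assms by (rule norm_power2_less_1)
  then have "qpoch (- q) (q\<^sup>2) (Suc k) \<noteq> 0"
    using qpoch_nonzero[of "- q" "q\<^sup>2" "Suc k"] assms by auto
  moreover have "(2 * k + 1) choose 2 = 2 * k * k + k"
    using double_choose_two_plus_self[of "2 * k + 1"] by (simp add: algebra_simps)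
  ultimately have "A ^ k * euler_coeff (- q) (2 * k + 1) * qpoch (- q) (q\<^sup>2) (Suc k)
      = A ^ k * (- q) ^ (2 * k * k + k) / qpoch (q\<^sup>2) (q\<^sup>2) k"
    unfolding euler_coeff_def qpoch_neg_odd by simp
  also have "(- q) ^ (2 * k * k + k) = (- 1) ^ k * q ^ (2 * k * k + k)"
    by (simp add: power_minus[of q] power_add power_mult)
  finally show ?thesis
    by (simp add: G_coeff_def power_minus[of A] mult_ac)
qed

lemma summable_norm_G_coeff:
  assumes "norm q < 1"
  shows "summable (\<lambda>k. norm (G_coeff A q k))"
proof (rule summable_comparison_test'[OF summable_norm_euler_series[of "q\<^sup>2" "A * q ^ 3"]])
  show "norm (q\<^sup>2) < 1"
    using assms by (rule norm_power2_less_1)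
  fix k
  have "2 * (k choose 2) + 3 * k \<le> 2 * k * k + k"
    using double_choose_two_plus_self[of k] by (simp add: algebra_simps)
  then have "norm q ^ (2 * k * k + k) \<le> norm q ^ (2 * (k choose 2) + 3 * k)"
    using assms by (intro power_decreasing) auto
  then have "norm (G_coeff A q k)
      \<le> norm A ^ k * norm q ^ (2 * (k choose 2) + 3 * k) / norm (qpoch (q\<^sup>2) (q\<^sup>2) k)"
    by (simp add: G_coeff_def norm_mult norm_divide norm_power divide_right_mono mult_left_mono)
  also have "\<dots> = norm (euler_coeff (q\<^sup>2) k * (A * q ^ 3) ^ k)"
    by (simp add: euler_coeff_def norm_mult norm_divide norm_power power_add power_mult
        power_mult_distrib)
  finally show "norm (norm (G_coeff A q k)) \<le> norm (euler_coeff (q\<^sup>2) k * (A * q ^ 3) ^ k)"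
    by simp
qed

lemma G_array_summable:
  assumes "norm q < 1"
  shows "G_array A q summable_on UNIV"
proof (rule summable_on_dominated_product)
  show "summable (\<lambda>k. norm (G_coeff A q k))"
    using assms by (rule summable_norm_G_coeff)
  show "summable (\<lambda>m. norm (euler_coeff (q\<^sup>2) m * (q ^ 3) ^ m))"
    using assms by (intro summable_norm_euler_series norm_power2_less_1)
  fix k m
  have "norm q ^ ((2 * k + 3) * m) \<le> norm q ^ (3 * m)"
    using assms by (intro power_decreasing) auto
  then show "norm (G_array A q (k, m))
      \<le> norm (G_coeff A q k) * norm (euler_coeff (q\<^sup>2) m * (q ^ 3) ^ m)"
    by (simp add: G_array_def norm_mult norm_power mult_left_mono flip: power_mult)
qed auto

lemma G_array_row_sums:
  assumes "norm q < 1"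
  shows "(\<lambda>m. G_array A q (k, m))
           sums (A ^ k * euler_coeff (- q) (2 * k + 1) * qpoch_inf (- q) (q\<^sup>2))"
proof -
  have Q: "norm (q\<^sup>2) < 1"
    using assms by (rule norm_power2_less_1)
  have "(\<lambda>m. G_array A q (k, m)) sums (G_coeff A q k * qpoch_inf (- (q ^ (2 * k + 3))) (q\<^sup>2))"
    unfolding G_array_def using euler_identity[OF Q] by (simp add: sums_mult)
  moreover have "q ^ (2 * k + 3) = q * (q\<^sup>2) ^ Suc k"
  proof -
    have "2 * k + 3 = Suc (2 * Suc k)"
      by simp
    then show ?thesis
      by (simp only: power_Suc power_mult)
  qed
  then have "qpoch_inf (- q) (q\<^sup>2)
      = qpoch (- q) (q\<^sup>2) (Suc k) * qpoch_inf (- (q ^ (2 * k + 3))) (q\<^sup>2)"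
    using qpoch_inf_split[OF Q, of "- q" "Suc k"] by simp
  ultimately show ?thesis
    by (simp add: G_coeff_eq_odd_euler_coeff[OF assms] mult_ac)
qed

lemma G_array_has_sum:
  assumes "norm q < 1"
  shows "(G_array A q has_sum G A q) UNIV"
proof -
  have S: "(G_array A q has_sum infsum (G_array A q) UNIV) UNIV"
    using G_array_summable[OF assms] by simp
  then have "(\<lambda>n. \<Sum>k\<le>n. G_array A q (k, n - k)) sums infsum (G_array A q) UNIV"
    by (rule sums_antidiagonal)
  then have "G A q = infsum (G_array A q) UNIV"
    unfolding G_def G_term_eq_antidiagonal_sum[OF assms] by (rule sums_unique[symmetric])
  with S show ?thesis
    by simp
qed

lemma sums_odd_euler_coeff:
  assumes "norm q < 1" and "s\<^sup>2 = A" and "s \<noteq> 0"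
  shows "(\<lambda>k. A ^ k * euler_coeff (- q) (2 * k + 1))
           sums ((qpoch_inf (- s) (- q) - qpoch_inf s (- q)) / (2 * s))"
proof -
  have "(\<lambda>k. euler_coeff (- q) (2 * k + 1) * s ^ (2 * k + 1))
          sums ((qpoch_inf (- s) (- q) - qpoch_inf s (- q)) / 2)"
    using euler_identity[of "- q" s] euler_identity[of "- q" "- s"] assms(1)
    by (intro sums_odd_terms) simp_all
  then have "(\<lambda>k. euler_coeff (- q) (2 * k + 1) * s ^ (2 * k + 1) / s)
               sums ((qpoch_inf (- s) (- q) - qpoch_inf s (- q)) / 2 / s)"
    by (rule sums_divide)
  moreover have "euler_coeff (- q) (2 * k + 1) * s ^ (2 * k + 1) / s
      = A ^ k * euler_coeff (- q) (2 * k + 1)" for k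
    using assms(2,3) by (simp add: power_mult)
  ultimately show ?thesis
    by simp
qed

theorem lemma3p2:
  fixes A q s :: complex
  assumes "A \<noteq> 0" and "s\<^sup>2 = A" and "norm q < 1"
  shows "G A q = 1 / (2 * s) * qpoch_inf (- q) (q\<^sup>2)
                 * (qpoch_inf (- s) (- q) - qpoch_inf s (- q))"
proof -
  have s: "s \<noteq> 0"
    using assms(1,2) by auto
  have "(\<lambda>k. A ^ k * euler_coeff (- q) (2 * k + 1) * qpoch_inf (- q) (q\<^sup>2)) sums G A q"
    using G_array_has_sum[OF assms(3)] G_array_row_sums[OF assms(3)] by (rule sums_row_sums)
  moreover have "(\<lambda>k. A ^ k * euler_coeff (- q) (2 * k + 1) * qpoch_inf (- q) (q\<^sup>2))
      sums ((qpoch_inf (- s) (- q) - qpoch_inf s (- q)) / (2 * s) * qpoch_inf (- q) (q\<^sup>2))"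
    using sums_odd_euler_coeff[OF assms(3,2) s] by (rule sums_mult2)
  ultimately have "G A q
      = (qpoch_inf (- s) (- q) - qpoch_inf s (- q)) / (2 * s) * qpoch_inf (- q) (q\<^sup>2)"
    by (rule sums_unique2)
  then show ?thesis
    by (simp add: mult_ac)
qed

end
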